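(* Let $\mathbb{K}\in\{\mathbb{R},\mathbb{C}\}$, let $X$ be a linear space over $\mathbb{K}$, and let $\phi\colon X\times X\to\mathbb{K}$ be biadditive with $\phi(z_0,z_0)\neq 0$ for some $z_0\in X$. Suppose the equation $f(x+y)=f(x)f(y)-\phi(x,y)$ ($x,y\in X$) has at least one solution $f\colon X\to\mathbb{K}$. Then: (i) there exist $a\in\mathbb{K}\setminus\{0\}$ and a nonzero additive functional $F\colon X\to\mathbb{K}$ such that $\phi(x,y)=a^2F(x)F(y)$ for all $x,y\in X$; and (ii) the equation has exactly two solutions $f\colon X\to\mathbb{K}$, namely $f(x)=a\phi(x,z_0)+1$ and $f(x)=-a\phi(x,z_0)+1$, where $a\in\mathbb{K}$ is a constant with $a^2\phi(x,z_0)\phi(y,z_0)=\phi(x,y)$ for all $x,y\in X$ (so $a^2=1/\phi(z_0,z_0)$).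
   Context: A map $\phi\colon X\times X\to\mathbb{K}$ is biadditive if it is additive in each variable separately (no homogeneity assumed). A functional $F\colon X\to\mathbb{K}$ is additive if $F(x+y)=F(x)+F(y)$ for all $x,y$. *)

theory Defs
  imports Complex_Main
begin

text \<open>Linear spaces over the complex numbers (the library only has real vector
spaces as a type class). Standard module axioms over the field of complex numbers.\<close>
class complex_vector = ab_group_add +
  fixes scaleC :: "complex \<Rightarrow> 'a \<Rightarrow> 'a"
  assumes scaleC_add_right: "scaleC c (x + y) = scaleC c x + scaleC c y"
    and scaleC_add_left: "scaleC (c + d) x = scaleC c x + scaleC d x"
    and scaleC_scaleC: "scaleC c (scaleC d x) = scaleC (c * d) x"
    and scaleC_one: "scaleC 1 x = x"

definition biadditive :: "('x::ab_group_add \<Rightarrow> 'x \<Rightarrow> 'k::ab_group_add) \<Rightarrow> bool" where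
  "biadditive \<phi> \<longleftrightarrow> (\<forall>x y z. \<phi> (x + y) z = \<phi> x z + \<phi> y z) \<and>
                     (\<forall>x y z. \<phi> x (y + z) = \<phi> x y + \<phi> x z)"

end

theory Submission
  imports Defs
begin

text \<open>Associativity of addition applied to the equation gives
  \<open>\<phi>(x,y)(f(z) - 1) = \<phi>(y,z)(f(x) - 1)\<close>; with \<open>x = y = z\<^sub>0\<close> and the symmetry of \<open>\<phi>\<close>
  (from \<open>x + y = y + x\<close>) this forces every solution
  to be of the form \<open>f = b\<phi>(\<cdot>,z\<^sub>0) + 1\<close>. Substituting that form back, the equation becomes
  \<open>b\<^sup>2\<phi>(x,z\<^sub>0)\<phi>(y,z\<^sub>0) = \<phi>(x,y)\<close>, which at \<open>x = y = z\<^sub>0\<close> pins \<open>b\<^sup>2\<close> down to \<open>1/\<phi>(z\<^sub>0,z\<^sub>0)\<close>,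
  leaving exactly the two solutions \<open>b = \<plusminus>a\<close>.\<close>

lemma biadditive_add_left:
  "biadditive \<phi> \<Longrightarrow> \<phi> (x + y) z = \<phi> x z + \<phi> y z"
  unfolding biadditive_def by blast

lemma biadditive_add_right:
  "biadditive \<phi> \<Longrightarrow> \<phi> x (y + z) = \<phi> x y + \<phi> x z"
  unfolding biadditive_def by blast

lemma additive_biadditive_left:
  "biadditive \<phi> \<Longrightarrow> additive (\<lambda>x. \<phi> x z)"
  by unfold_locales (rule biadditive_add_left)

lemma solution_kernel_symmetric:
  fixes \<phi> :: "'x::ab_semigroup_add \<Rightarrow> 'x \<Rightarrow> 'k::comm_ring"
  assumes "\<forall>x y. f (x + y) = f x * f y - \<phi> x y"
  shows "\<phi> x y = \<phi> y x"
  using assms[rule_format, of x y] assms[rule_format, of y x]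
  by (simp add: add.commute mult.commute)

lemma solution_associativity_identity:
  fixes \<phi> :: "'x::ab_group_add \<Rightarrow> 'x \<Rightarrow> 'k::comm_ring_1"
  assumes bi: "biadditive \<phi>" and fe: "\<forall>x y. f (x + y) = f x * f y - \<phi> x y"
  shows "\<phi> x y * (f z - 1) = \<phi> y z * (f x - 1)"
proof -
  have "f ((x + y) + z) = f (x + (y + z))"
    by (simp add: add.assoc)
  then have "(f x * f y - \<phi> x y) * f z - (\<phi> x z + \<phi> y z)
             = f x * (f y * f z - \<phi> y z) - (\<phi> x y + \<phi> x z)"
    using fe biadditive_add_left[OF bi] biadditive_add_right[OF bi] by metis
  then show ?thesis
    by (simp add: algebra_simps)
qed

lemma solution_eq_affine:
  fixes \<phi> :: "'x::ab_group_add \<Rightarrow> 'x \<Rightarrow> 'k::field"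
  assumes bi: "biadditive \<phi>" and nz: "\<phi> z0 z0 \<noteq> 0"
    and fe: "\<forall>x y. f (x + y) = f x * f y - \<phi> x y"
  shows "f = (\<lambda>z. (f z0 - 1) / \<phi> z0 z0 * \<phi> z z0 + 1)"
proof
  fix z
  have "\<phi> z0 z0 * (f z - 1) = \<phi> z z0 * (f z0 - 1)"
    using solution_associativity_identity[OF bi fe, of z0 z0 z]
      solution_kernel_symmetric[OF fe, of z0 z] by simp
  then have "f z - 1 = (f z0 - 1) / \<phi> z0 z0 * \<phi> z z0"
    using nz by (simp add: field_simps)
  then show "f z = (f z0 - 1) / \<phi> z0 z0 * \<phi> z z0 + 1"
    by (simp add: algebra_simps)
qed

lemma affine_solution_iff:
  fixes \<phi> :: "'x::ab_group_add \<Rightarrow> 'x \<Rightarrow> 'k::comm_ring_1"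
  assumes bi: "biadditive \<phi>"
  shows "(\<forall>x y. b * \<phi> (x + y) z0 + 1 = (b * \<phi> x z0 + 1) * (b * \<phi> y z0 + 1) - \<phi> x y)
     \<longleftrightarrow> (\<forall>x y. b\<^sup>2 * \<phi> x z0 * \<phi> y z0 = \<phi> x y)"
  by (simp add: biadditive_add_left[OF bi] algebra_simps power2_eq_square) metis

lemma factorization_coeff_square:
  fixes \<phi> :: "'x \<Rightarrow> 'x \<Rightarrow> 'k::field"
  assumes "\<forall>x y. b\<^sup>2 * \<phi> x z0 * \<phi> y z0 = \<phi> x y" and "\<phi> z0 z0 \<noteq> 0"
  shows "b\<^sup>2 * \<phi> z0 z0 = 1"
  using assms by (metis mult_cancel_right1)

lemma solution_factorizes:
  fixes \<phi> :: "'x::ab_group_add \<Rightarrow> 'x \<Rightarrow> 'k::field"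
  assumes bi: "biadditive \<phi>" and nz: "\<phi> z0 z0 \<noteq> 0"
    and fe: "\<forall>x y. f (x + y) = f x * f y - \<phi> x y"
  obtains b where "f = (\<lambda>z. b * \<phi> z z0 + 1)" and "\<forall>x y. b\<^sup>2 * \<phi> x z0 * \<phi> y z0 = \<phi> x y"
proof -
  define b where "b = (f z0 - 1) / \<phi> z0 z0"
  have f_eq: "f = (\<lambda>z. b * \<phi> z z0 + 1)"
    unfolding b_def by (rule solution_eq_affine[OF bi nz fe])
  moreover have "\<forall>x y. b\<^sup>2 * \<phi> x z0 * \<phi> y z0 = \<phi> x y"
    using fe unfolding affine_solution_iff[OF bi, symmetric] f_eq by simp
  ultimately show thesis
    by (rule that)
qed

lemma biadditive_rank_one:
  fixes \<phi> :: "'x::ab_group_add \<Rightarrow> 'x \<Rightarrow> 'k::field"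
  assumes bi: "biadditive \<phi>" and nz: "\<phi> z0 z0 \<noteq> 0"
    and b: "\<forall>x y. b\<^sup>2 * \<phi> x z0 * \<phi> y z0 = \<phi> x y"
  shows "\<exists>a. a \<noteq> 0 \<and> (\<exists>F. additive F \<and> F \<noteq> (\<lambda>x. 0) \<and> (\<forall>x y. \<phi> x y = a\<^sup>2 * F x * F y))"
proof (intro exI conjI)
  show "b \<noteq> 0"
    using factorization_coeff_square[OF b nz] by auto
  show "additive (\<lambda>x. \<phi> x z0)"
    by (rule additive_biadditive_left[OF bi])
  show "(\<lambda>x. \<phi> x z0) \<noteq> (\<lambda>x. 0)"
    using nz by (auto dest: fun_cong[where x = z0])
  show "\<forall>x y. \<phi> x y = b\<^sup>2 * \<phi> x z0 * \<phi> y z0"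
    using b by simp
qed

lemma solution_set_eq:
  fixes \<phi> :: "'x::ab_group_add \<Rightarrow> 'x \<Rightarrow> 'k::field"
  assumes bi: "biadditive \<phi>" and nz: "\<phi> z0 z0 \<noteq> 0"
    and a: "\<forall>x y. a\<^sup>2 * \<phi> x z0 * \<phi> y z0 = \<phi> x y"
  shows "{f. \<forall>x y. f (x + y) = f x * f y - \<phi> x y} =
           {(\<lambda>x. a * \<phi> x z0 + 1), (\<lambda>x. - a * \<phi> x z0 + 1)}"
proof (intro equalityI subsetI)
  fix f
  assume "f \<in> {f. \<forall>x y. f (x + y) = f x * f y - \<phi> x y}"
  then obtain b where f: "f = (\<lambda>z. b * \<phi> z z0 + 1)" and b: "\<forall>x y. b\<^sup>2 * \<phi> x z0 * \<phi> y z0 = \<phi> x y"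
    using solution_factorizes[OF bi nz] by blast
  have "b\<^sup>2 * \<phi> z0 z0 = a\<^sup>2 * \<phi> z0 z0"
    using factorization_coeff_square[OF b nz] factorization_coeff_square[OF a nz] by simp
  then have "b = a \<or> b = - a"
    using nz by (simp add: power2_eq_iff)
  then show "f \<in> {(\<lambda>x. a * \<phi> x z0 + 1), (\<lambda>x. - a * \<phi> x z0 + 1)}"
    using f by auto
next
  fix f
  assume "f \<in> {(\<lambda>x. a * \<phi> x z0 + 1), (\<lambda>x. - a * \<phi> x z0 + 1)}"
  then obtain b where f: "f = (\<lambda>x. b * \<phi> x z0 + 1)" and "b = a \<or> b = - a"
    by blast
  then have "b\<^sup>2 = a\<^sup>2"
    by auto
  with a have "\<forall>x y. b\<^sup>2 * \<phi> x z0 * \<phi> y z0 = \<phi> x y"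
    by simp
  then show "f \<in> {f. \<forall>x y. f (x + y) = f x * f y - \<phi> x y}"
    unfolding f affine_solution_iff[OF bi, symmetric] by simp
qed

lemma two_solutions_distinct:
  fixes \<phi> :: "'x \<Rightarrow> 'x \<Rightarrow> 'k::field_char_0"
  assumes nz: "\<phi> z0 z0 \<noteq> 0" and a: "\<forall>x y. a\<^sup>2 * \<phi> x z0 * \<phi> y z0 = \<phi> x y"
  shows "(\<lambda>x. a * \<phi> x z0 + 1) \<noteq> (\<lambda>x. - a * \<phi> x z0 + 1)"
proof
  assume "(\<lambda>x. a * \<phi> x z0 + 1) = (\<lambda>x. - a * \<phi> x z0 + 1)"
  from fun_cong[OF this, of z0] have "a * \<phi> z0 z0 = 0"
    by simp
  moreover have "a \<noteq> 0"
    using factorization_coeff_square[OF a nz] by auto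
  ultimately show False
    using nz by simp
qed

lemma perturbed_exponential_equation_solutions:
  fixes \<phi> :: "'x::ab_group_add \<Rightarrow> 'x \<Rightarrow> 'k::field_char_0"
  assumes bi: "biadditive \<phi>" and nz: "\<phi> z0 z0 \<noteq> 0"
    and fe: "\<forall>x y. f (x + y) = f x * f y - \<phi> x y"
  shows "(\<exists>a. a \<noteq> 0 \<and> (\<exists>F. additive F \<and> F \<noteq> (\<lambda>x. 0) \<and>
              (\<forall>x y. \<phi> x y = a\<^sup>2 * F x * F y))) \<and>
        (\<exists>a. \<forall>x y. a\<^sup>2 * \<phi> x z0 * \<phi> y z0 = \<phi> x y) \<and>
        (\<forall>a. (\<forall>x y. a\<^sup>2 * \<phi> x z0 * \<phi> y z0 = \<phi> x y) \<longrightarrow>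
             {f. \<forall>x y. f (x + y) = f x * f y - \<phi> x y} =
               {(\<lambda>x. a * \<phi> x z0 + 1), (\<lambda>x. - a * \<phi> x z0 + 1)} \<and>
             (\<lambda>x. a * \<phi> x z0 + 1) \<noteq> (\<lambda>x. - a * \<phi> x z0 + 1))"
proof (intro conjI allI impI)
  obtain b where b: "\<forall>x y. b\<^sup>2 * \<phi> x z0 * \<phi> y z0 = \<phi> x y"
    using solution_factorizes[OF bi nz fe] by blast
  then show "\<exists>a. a \<noteq> 0 \<and> (\<exists>F. additive F \<and> F \<noteq> (\<lambda>x. 0) \<and> (\<forall>x y. \<phi> x y = a\<^sup>2 * F x * F y))"
    by (rule biadditive_rank_one[OF bi nz])
  from b show "\<exists>a. \<forall>x y. a\<^sup>2 * \<phi> x z0 * \<phi> y z0 = \<phi> x y" ..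
next
  fix a
  assume a: "\<forall>x y. a\<^sup>2 * \<phi> x z0 * \<phi> y z0 = \<phi> x y"
  show "{f. \<forall>x y. f (x + y) = f x * f y - \<phi> x y} =
          {(\<lambda>x. a * \<phi> x z0 + 1), (\<lambda>x. - a * \<phi> x z0 + 1)}"
    by (rule solution_set_eq[OF bi nz a])
  show "(\<lambda>x. a * \<phi> x z0 + 1) \<noteq> (\<lambda>x. - a * \<phi> x z0 + 1)"
    by (rule two_solutions_distinct[OF nz a])
qed

theorem mainTheorem2:
  shows
  "(\<forall>(\<phi> :: 'a::real_vector \<Rightarrow> 'a \<Rightarrow> real) z\<^sub>0.
      biadditive \<phi> \<and> \<phi> z\<^sub>0 z\<^sub>0 \<noteq> 0 \<and>
      (\<exists>f. \<forall>x y. f (x + y) = f x * f y - \<phi> x y) \<longrightarrow>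
        (\<exists>a. a \<noteq> 0 \<and> (\<exists>F. additive F \<and> F \<noteq> (\<lambda>x. 0) \<and>
              (\<forall>x y. \<phi> x y = a\<^sup>2 * F x * F y))) \<and>
        (\<exists>a. \<forall>x y. a\<^sup>2 * \<phi> x z\<^sub>0 * \<phi> y z\<^sub>0 = \<phi> x y) \<and>
        (\<forall>a. (\<forall>x y. a\<^sup>2 * \<phi> x z\<^sub>0 * \<phi> y z\<^sub>0 = \<phi> x y) \<longrightarrow>
             {f. \<forall>x y. f (x + y) = f x * f y - \<phi> x y} =
               {(\<lambda>x. a * \<phi> x z\<^sub>0 + 1), (\<lambda>x. - a * \<phi> x z\<^sub>0 + 1)} \<and>
             (\<lambda>x. a * \<phi> x z\<^sub>0 + 1) \<noteq> (\<lambda>x. - a * \<phi> x z\<^sub>0 + 1)))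
   \<and>
   (\<forall>(\<phi> :: 'b::complex_vector \<Rightarrow> 'b \<Rightarrow> complex) z\<^sub>0.
      biadditive \<phi> \<and> \<phi> z\<^sub>0 z\<^sub>0 \<noteq> 0 \<and>
      (\<exists>f. \<forall>x y. f (x + y) = f x * f y - \<phi> x y) \<longrightarrow>
        (\<exists>a. a \<noteq> 0 \<and> (\<exists>F. additive F \<and> F \<noteq> (\<lambda>x. 0) \<and>
              (\<forall>x y. \<phi> x y = a\<^sup>2 * F x * F y))) \<and>
        (\<exists>a. \<forall>x y. a\<^sup>2 * \<phi> x z\<^sub>0 * \<phi> y z\<^sub>0 = \<phi> x y) \<and>
        (\<forall>a. (\<forall>x y. a\<^sup>2 * \<phi> x z\<^sub>0 * \<phi> y z\<^sub>0 = \<phi> x y) \<longrightarrow>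
             {f. \<forall>x y. f (x + y) = f x * f y - \<phi> x y} =
               {(\<lambda>x. a * \<phi> x z\<^sub>0 + 1), (\<lambda>x. - a * \<phi> x z\<^sub>0 + 1)} \<and>
             (\<lambda>x. a * \<phi> x z\<^sub>0 + 1) \<noteq> (\<lambda>x. - a * \<phi> x z\<^sub>0 + 1)))"
  by (rule conjI; intro allI impI; elim conjE exE; rule perturbed_exponential_equation_solutions)

end
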